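(* Let $A\in\mathbb{R}^{m\times n}$ have full column rank $n$, $b\in\mathbb{R}^m$, $L\in\mathbb{R}^{n\times k}$ with $k\le n$, and let $g(A,b)=L^T(A^TA)^{-1}A^Tb$, which is Fréchet differentiable in a neighbourhood of $(A,b)$ with derivative $g'(A,b)$. Fix a matrix norm $\|\cdot\|_\ast$, which is either the Frobenius norm or the spectral norm. For $\alpha,\beta>0$ define $$\kappa_{g}(A,b;\alpha,\beta)=\max_{(\Delta A,\Delta b)\neq 0}\frac{\|g'(A,b).(\Delta A,\Delta b)\|_2}{\sqrt{\alpha^2\|\Delta A\|_\ast^2+\beta^2\|\Delta b\|_2^2}},$$ and define $\kappa_{g}(b)=\max_{\Delta b\neq0}\frac{\|\frac{\partial g}{\partial b}(A,b).\Delta b\|_2}{\|\Delta b\|_2}$ and $\kappa_{g}(A)=\max_{\Delta A\neq0}\frac{\|\frac{\partial g}{\partial A}(A,b).\Delta A\|_2}{\|\Delta A\|_\ast}$. Then for every fixed $\beta>0$, $$\lim_{\alpha\to+\infty}\kappa_g(A,b;\alpha,\beta)=\frac{1}{\beta}\kappa_g(b),$$ and for every fixed $\alpha>0$, $$\lim_{\beta\to+\infty}\kappa_g(A,b;\alpha,\beta)=\frac{1}{\alpha}\kappa_g(A).$$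
   Context: $\|\cdot\|_2$ is the Euclidean norm on vectors. $\frac{\partial g}{\partial A}(A,b)$ and $\frac{\partial g}{\partial b}(A,b)$ are the partial Fréchet derivatives of $g$, so that $g'(A,b).(\Delta A,\Delta b)=\frac{\partial g}{\partial A}(A,b).\Delta A+\frac{\partial g}{\partial b}(A,b).\Delta b$. *)

theory Defs
  imports "HOL-Analysis.Analysis"
begin

definition lsq_g :: "real^'k^'n \<Rightarrow> ((real^'n^'m) \<times> (real^'m)) \<Rightarrow> real^'k" where
  "lsq_g L = (\<lambda>(A, b). transpose L *v (matrix_inv (transpose A ** A) *v (transpose A *v b)))"

definition spectral_norm :: "real^'n^'m \<Rightarrow> real" where
  "spectral_norm M = onorm (\<lambda>x. M *v x)"

text \<open>Frobenius norm: the HOL-Analysis norm on real^'n^'m is exactly the Frobenius norm.\<close>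
definition frobenius_norm :: "real^'n^'m \<Rightarrow> real" where
  "frobenius_norm M = norm M"

text \<open>Mixed condition number kappa_g(A,b;alpha,beta), D being g'(A,b).\<close>
definition kappa_mixed ::
  "(real^'n^'m \<Rightarrow> real) \<Rightarrow> ((real^'n^'m) \<times> (real^'m) \<Rightarrow> real^'k) \<Rightarrow> real \<Rightarrow> real \<Rightarrow> real" where
  "kappa_mixed N D \<alpha> \<beta> =
     Sup {norm (D (dA, db)) / sqrt (\<alpha>\<^sup>2 * (N dA)\<^sup>2 + \<beta>\<^sup>2 * (norm db)\<^sup>2) | dA db. (dA, db) \<noteq> 0}"

text \<open>kappa_g(b), using the partial derivative dg/db . db = D (0, db).\<close>
definition kappa_b :: "((real^'n^'m) \<times> (real^'m) \<Rightarrow> real^'k) \<Rightarrow> real" where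
  "kappa_b D = Sup {norm (D (0, db)) / norm db | db. db \<noteq> 0}"

text \<open>kappa_g(A), using the partial derivative dg/dA . dA = D (dA, 0).\<close>
definition kappa_A ::
  "(real^'n^'m \<Rightarrow> real) \<Rightarrow> ((real^'n^'m) \<times> (real^'m) \<Rightarrow> real^'k) \<Rightarrow> real" where
  "kappa_A N D = Sup {norm (D (dA, 0)) / N dA | dA. dA \<noteq> 0}"

end

theory Submission
  imports Defs
begin

text \<open>
  Write \<open>\<kappa>\<^sub>A\<close> and \<open>\<kappa>\<^sub>b\<close> for the two partial condition numbers. Splitting
  \<open>g'(A,b).(\<Delta>A,\<Delta>b) = g'(A,b).(\<Delta>A,0) + g'(A,b).(0,\<Delta>b)\<close> and applying Cauchy-Schwarz in
  \<open>\<real>\<^sup>2\<close> to \<open>(\<kappa>\<^sub>A/\<alpha>) (\<alpha>\<parallel>\<Delta>A\<parallel>) + (\<kappa>\<^sub>b/\<beta>) (\<beta>\<parallel>\<Delta>b\<parallel>)\<close> gives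
  \<open>\<kappa>(\<alpha>,\<beta>) \<le> sqrt ((\<kappa>\<^sub>A/\<alpha>)\<^sup>2 + (\<kappa>\<^sub>b/\<beta>)\<^sup>2)\<close>, while restricting the supremum to
  perturbations of one argument only gives \<open>max (\<kappa>\<^sub>A/\<alpha>) (\<kappa>\<^sub>b/\<beta>) \<le> \<kappa>(\<alpha>,\<beta>)\<close>.
  Both limits follow by squeezing.
\<close>

lemma norm_le_card_mult_spectral_norm:
  fixes M :: "real^'n^'m"
  shows "norm M \<le> real CARD('m) * real CARD('n) * spectral_norm M"
proof -
  have row_bound: "norm (M$i) \<le> real CARD('n) * spectral_norm M" for i
  proof -
    have "norm (M$i) \<le> (\<Sum>j\<in>UNIV. \<bar>M$i$j\<bar>)" by (rule norm_le_l1_cart)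
    also have "\<dots> \<le> (\<Sum>j\<in>(UNIV::'n set). spectral_norm M)"
      by (rule sum_mono) (simp add: spectral_norm_def matrix_component_le_onorm)
    finally show ?thesis by simp
  qed
  have "norm M \<le> (\<Sum>i\<in>UNIV. norm (M$i))"
    by (simp add: norm_vec_def L2_set_le_sum)
  also have "\<dots> \<le> (\<Sum>i\<in>(UNIV::'m set). real CARD('n) * spectral_norm M)"
    by (rule sum_mono) (rule row_bound)
  finally show ?thesis by simp
qed

lemma sum_products_le_sqrt_sum_squares:
  fixes p q u v :: real
  shows "p * u + q * v \<le> sqrt (p\<^sup>2 + q\<^sup>2) * sqrt (u\<^sup>2 + v\<^sup>2)"
  using norm_cauchy_schwarz[of "(p, q)" "(u, v)"] by (simp add: norm_Pair)

lemma tendsto_at_top_squeeze_sqrt: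
  fixes f :: "real \<Rightarrow> real"
  assumes "l \<ge> 0"
    and "\<forall>\<^sub>F x in at_top. l \<le> f x"
    and "\<forall>\<^sub>F x in at_top. f x \<le> sqrt (l\<^sup>2 + (c / x)\<^sup>2)"
  shows "(f \<longlongrightarrow> l) at_top"
proof (rule tendsto_sandwich[OF assms(2,3) tendsto_const])
  have "((\<lambda>x. sqrt (l\<^sup>2 + (c / x)\<^sup>2)) \<longlongrightarrow> sqrt (l\<^sup>2 + 0\<^sup>2)) at_top"
    by (intro tendsto_intros tendsto_divide_0[OF tendsto_const]
        filterlim_ident filterlim_at_top_imp_at_infinity)
  then show "((\<lambda>x. sqrt (l\<^sup>2 + (c / x)\<^sup>2)) \<longlongrightarrow> l) at_top"
    using assms(1) by simp
qed

locale mixed_condition_number =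
  fixes N :: "real^'n^'m \<Rightarrow> real"
    and D :: "(real^'n^'m) \<times> (real^'m) \<Rightarrow> real^'k"
  assumes bounded_linear_D: "bounded_linear D"
    and N_zero: "N 0 = 0"
    and norm_le_N: "\<exists>C>0. \<forall>x. norm x \<le> C * N x"
begin

interpretation D: bounded_linear D by (rule bounded_linear_D)

lemma N_pos: "x \<noteq> 0 \<Longrightarrow> N x > 0"
  using norm_le_N by (metis norm_eq_zero norm_ge_zero order.not_eq_order_implies_strict
      order_less_le_trans zero_less_mult_pos)

lemma N_nonneg: "N x \<ge> 0"
  using N_pos N_zero by (cases "x = 0") (auto intro: less_imp_le)

lemma D_split: "D (x, y) = D (x, 0) + D (0, y)"
  using D.add[of "(x, 0)" "(0, y)"] by simp

lemma bdd_above_kappa_b_set: "bdd_above {norm (D (0, db)) / norm db | db. db \<noteq> 0}"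
proof -
  obtain B where B: "\<And>z. norm (D z) \<le> norm z * B" using D.pos_bounded by blast
  have "norm (D (0, db)) / norm db \<le> B" if "db \<noteq> 0" for db
    using that B[of "(0, db)"] by (simp add: divide_le_eq norm_Pair mult.commute)
  then show ?thesis by (intro bdd_aboveI[of _ B]) blast
qed

lemma norm_D_snd_le: "norm (D (0, y)) \<le> kappa_b D * norm y"
proof (cases "y = 0")
  case False
  then have "norm (D (0, y)) / norm y \<le> kappa_b D"
    unfolding kappa_b_def by (intro cSup_upper bdd_above_kappa_b_set) blast
  with False show ?thesis by (simp add: divide_le_eq)
qed (simp add: D.zero[unfolded zero_prod_def])

lemma kappa_b_nonneg: "kappa_b D \<ge> 0"
proof -
  have "0 \<le> kappa_b D * norm (1::real^'m)"
    using norm_D_snd_le[of 1] norm_ge_zero order_trans by blast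
  moreover have "norm (1::real^'m) > 0" by (simp add: vec_eq_iff)
  ultimately show ?thesis by (simp add: zero_le_mult_iff)
qed

lemma bdd_above_kappa_A_set: "bdd_above {norm (D (dA, 0)) / N dA | dA. dA \<noteq> 0}"
proof -
  obtain B where B: "B > 0" "\<And>z. norm (D z) \<le> norm z * B" using D.pos_bounded by blast
  obtain C where C: "\<And>x. norm x \<le> C * N x" using norm_le_N by blast
  have "norm (D (dA, 0)) / N dA \<le> B * C" if "dA \<noteq> 0" for dA
  proof -
    have "norm (D (dA, 0)) \<le> norm dA * B" using B(2)[of "(dA, 0)"] by simp
    also have "\<dots> \<le> C * N dA * B" using C[of dA] B(1) by (simp add: mult_right_mono)
    finally show ?thesis using N_pos[OF that] by (simp add: divide_le_eq algebra_simps)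
  qed
  then show ?thesis by (intro bdd_aboveI[of _ "B * C"]) blast
qed

lemma norm_D_fst_le: "norm (D (x, 0)) \<le> kappa_A N D * N x"
proof (cases "x = 0")
  case False
  then have "norm (D (x, 0)) / N x \<le> kappa_A N D"
    unfolding kappa_A_def by (intro cSup_upper bdd_above_kappa_A_set) blast
  with N_pos[OF False] show ?thesis by (simp add: divide_le_eq)
qed (simp add: D.zero[unfolded zero_prod_def] N_zero)

lemma kappa_A_nonneg: "kappa_A N D \<ge> 0"
proof -
  have "0 \<le> kappa_A N D * N 1"
    using norm_D_fst_le[of 1] norm_ge_zero order_trans by blast
  moreover have "N 1 > 0" by (rule N_pos) (simp add: vec_eq_iff)
  ultimately show ?thesis by (simp add: zero_le_mult_iff)
qed

lemma weighted_norm_pos: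
  assumes "\<alpha> > 0" "\<beta> > 0" "(x, y) \<noteq> 0"
  shows "sqrt (\<alpha>\<^sup>2 * (N x)\<^sup>2 + \<beta>\<^sup>2 * (norm y)\<^sup>2) > 0"
  using assms N_pos[of x] by (cases "x = 0") (auto simp: zero_prod_def add_pos_nonneg add_nonneg_pos)

lemma norm_D_div_weighted_norm_le:
  assumes "\<alpha> > 0" "\<beta> > 0" "(x, y) \<noteq> 0"
  shows "norm (D (x, y)) / sqrt (\<alpha>\<^sup>2 * (N x)\<^sup>2 + \<beta>\<^sup>2 * (norm y)\<^sup>2)
    \<le> sqrt ((kappa_A N D / \<alpha>)\<^sup>2 + (kappa_b D / \<beta>)\<^sup>2)"
proof -
  let ?KA = "kappa_A N D" and ?Kb = "kappa_b D"
  have "norm (D (x, y)) \<le> ?KA * N x + ?Kb * norm y"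
    using D_split[of x y] norm_triangle_ineq[of "D (x, 0)" "D (0, y)"]
      norm_D_fst_le[of x] norm_D_snd_le[of y] by simp
  also have "\<dots> = (?KA / \<alpha>) * (\<alpha> * N x) + (?Kb / \<beta>) * (\<beta> * norm y)"
    using assms by simp
  also have "\<dots> \<le> sqrt ((?KA / \<alpha>)\<^sup>2 + (?Kb / \<beta>)\<^sup>2) * sqrt ((\<alpha> * N x)\<^sup>2 + (\<beta> * norm y)\<^sup>2)"
    by (rule sum_products_le_sqrt_sum_squares)
  finally show ?thesis
    using weighted_norm_pos[OF assms] by (simp add: divide_le_eq power_mult_distrib)
qed

lemma kappa_mixed_le:
  assumes "\<alpha> > 0" "\<beta> > 0"
  shows "kappa_mixed N D \<alpha> \<beta> \<le> sqrt ((kappa_A N D / \<alpha>)\<^sup>2 + (kappa_b D / \<beta>)\<^sup>2)"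
proof -
  have "((0::real^'n^'m), (1::real^'m)) \<noteq> 0" by (simp add: vec_eq_iff zero_prod_def)
  then show ?thesis
    unfolding kappa_mixed_def
    by (intro cSup_least) (use norm_D_div_weighted_norm_le assms in blast)+
qed

lemma le_kappa_mixed:
  assumes "\<alpha> > 0" "\<beta> > 0" "(x, y) \<noteq> 0"
  shows "norm (D (x, y)) / sqrt (\<alpha>\<^sup>2 * (N x)\<^sup>2 + \<beta>\<^sup>2 * (norm y)\<^sup>2) \<le> kappa_mixed N D \<alpha> \<beta>"
  unfolding kappa_mixed_def
  by (intro cSup_upper bdd_aboveI[of _ "sqrt ((kappa_A N D / \<alpha>)\<^sup>2 + (kappa_b D / \<beta>)\<^sup>2)"])
    (use assms norm_D_div_weighted_norm_le in blast)+

lemma kappa_b_div_le_kappa_mixed: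
  assumes "\<alpha> > 0" "\<beta> > 0"
  shows "kappa_b D / \<beta> \<le> kappa_mixed N D \<alpha> \<beta>"
proof -
  have "kappa_b D \<le> \<beta> * kappa_mixed N D \<alpha> \<beta>"
    unfolding kappa_b_def
  proof (rule cSup_least, blast intro: vec_eq_iff[THEN iffD2], clarify)
    fix db :: "real^'m" assume "db \<noteq> 0"
    then have "norm (D (0, db)) / (\<beta> * norm db) \<le> kappa_mixed N D \<alpha> \<beta>"
      using le_kappa_mixed[OF assms, of 0 db] assms
      by (simp add: N_zero zero_prod_def real_sqrt_mult)
    with \<open>db \<noteq> 0\<close> assms show "norm (D (0, db)) / norm db \<le> \<beta> * kappa_mixed N D \<alpha> \<beta>"
      by (simp add: divide_le_eq field_simps)
  qed
  with assms show ?thesis by (simp add: divide_le_eq mult.commute)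
qed

lemma kappa_A_div_le_kappa_mixed:
  assumes "\<alpha> > 0" "\<beta> > 0"
  shows "kappa_A N D / \<alpha> \<le> kappa_mixed N D \<alpha> \<beta>"
proof -
  have "kappa_A N D \<le> \<alpha> * kappa_mixed N D \<alpha> \<beta>"
    unfolding kappa_A_def
  proof (rule cSup_least, blast intro: vec_eq_iff[THEN iffD2], clarify)
    fix dA :: "real^'n^'m" assume "dA \<noteq> 0"
    then have "norm (D (dA, 0)) / (\<alpha> * N dA) \<le> kappa_mixed N D \<alpha> \<beta>"
      using le_kappa_mixed[OF assms, of dA 0] assms N_nonneg[of dA]
      by (simp add: zero_prod_def real_sqrt_mult)
    with N_pos[OF \<open>dA \<noteq> 0\<close>] assms
    show "norm (D (dA, 0)) / N dA \<le> \<alpha> * kappa_mixed N D \<alpha> \<beta>"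
      by (simp add: divide_le_eq field_simps)
  qed
  with assms show ?thesis by (simp add: divide_le_eq mult.commute)
qed

lemma kappa_mixed_tendsto_at_top_fst:
  assumes "\<beta> > 0"
  shows "((\<lambda>\<alpha>. kappa_mixed N D \<alpha> \<beta>) \<longlongrightarrow> kappa_b D / \<beta>) at_top"
proof (rule tendsto_at_top_squeeze_sqrt[where c = "kappa_A N D"])
  show "\<forall>\<^sub>F \<alpha> in at_top. kappa_b D / \<beta> \<le> kappa_mixed N D \<alpha> \<beta>"
    using eventually_gt_at_top[of 0] by eventually_elim (use kappa_b_div_le_kappa_mixed assms in auto)
  show "\<forall>\<^sub>F \<alpha> in at_top. kappa_mixed N D \<alpha> \<beta> \<le> sqrt ((kappa_b D / \<beta>)\<^sup>2 + (kappa_A N D / \<alpha>)\<^sup>2)"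
    using eventually_gt_at_top[of 0] by eventually_elim (use kappa_mixed_le assms in \<open>auto simp: add.commute\<close>)
qed (use kappa_b_nonneg assms in simp)

lemma kappa_mixed_tendsto_at_top_snd:
  assumes "\<alpha> > 0"
  shows "((\<lambda>\<beta>. kappa_mixed N D \<alpha> \<beta>) \<longlongrightarrow> kappa_A N D / \<alpha>) at_top"
proof (rule tendsto_at_top_squeeze_sqrt[where c = "kappa_b D"])
  show "\<forall>\<^sub>F \<beta> in at_top. kappa_A N D / \<alpha> \<le> kappa_mixed N D \<alpha> \<beta>"
    using eventually_gt_at_top[of 0] by eventually_elim (use kappa_A_div_le_kappa_mixed assms in auto)
  show "\<forall>\<^sub>F \<beta> in at_top. kappa_mixed N D \<alpha> \<beta> \<le> sqrt ((kappa_A N D / \<alpha>)\<^sup>2 + (kappa_b D / \<beta>)\<^sup>2)"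
    using eventually_gt_at_top[of 0] by eventually_elim (use kappa_mixed_le assms in auto)
qed (use kappa_A_nonneg assms in simp)

end

lemma mixed_condition_number_frobenius_or_spectral:
  fixes N :: "real^'n^'m \<Rightarrow> real" and D :: "(real^'n^'m) \<times> (real^'m) \<Rightarrow> real^'k"
  assumes "bounded_linear D" and "N = frobenius_norm \<or> N = spectral_norm"
  shows "mixed_condition_number N D"
  using assms(2)
proof
  assume "N = frobenius_norm"
  with assms(1) show ?thesis
    by (auto simp: mixed_condition_number_def frobenius_norm_def intro!: exI[of _ 1])
next
  assume "N = spectral_norm"
  with assms(1) show ?thesis
    unfolding mixed_condition_number_def
    by (auto simp: spectral_norm_def onorm_zero
        intro!: exI[of _ "real CARD('m) * real CARD('n)"] norm_le_card_mult_spectral_norm[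
          unfolded spectral_norm_def])
qed

theorem mainTheorem3:
  fixes A :: "real^'n^'m" and b :: "real^'m" and L :: "real^'k^'n"
    and N :: "real^'n^'m \<Rightarrow> real"
    and D :: "(real^'n^'m) \<times> (real^'m) \<Rightarrow> real^'k"
  assumes "rank A = CARD('n)"
    and "CARD('k) \<le> CARD('n)"
    and "(lsq_g L has_derivative D) (at (A, b))"
    and "N = frobenius_norm \<or> N = spectral_norm"
  shows "(\<forall>\<beta>>0. ((\<lambda>\<alpha>. kappa_mixed N D \<alpha> \<beta>) \<longlongrightarrow> kappa_b D / \<beta>) at_top)
       \<and> (\<forall>\<alpha>>0. ((\<lambda>\<beta>. kappa_mixed N D \<alpha> \<beta>) \<longlongrightarrow> kappa_A N D / \<alpha>) at_top)"
proof -
  have "bounded_linear D" using assms(3) by (rule has_derivative_bounded_linear)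
  then interpret mixed_condition_number N D
    using assms(4) by (rule mixed_condition_number_frobenius_or_spectral)
  show ?thesis using kappa_mixed_tendsto_at_top_fst kappa_mixed_tendsto_at_top_snd by blast
qed

end
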